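(* Let $s\in\{0,1\}^n$, $p\in[0,1)$, $x\in\{0,1\}^k$ with $k\ge2$, and $i\in\{1,\dots,n-k+1\}$. Then $$K_{s,x}[i]=\frac{1}{(1-p)^k}\left(P_{s,x}[i]-\sum_{\ell=k+1}^{n}\sum_{y\in Y_\ell(x)}(-1)^{|y|-|x|+1}P_{s,y}[i]\binom{y}{x}'\left(\frac{p}{1-p}\right)^{\ell-k}\right).$$
   Context: Deletion channel: a trace $\tilde S$ of $s$ is obtained by deleting each bit of $s$ independently with probability $p$. Strings are indexed from 1, $s[a:b]=(s[a],\dots,s[b])$, and for a string $z$, $z[2:-2]$ denotes $z$ with its first and last symbols removed. For strings $y,z$, $\binom{y}{z}$ denotes the number of ways to delete $|y|-|z|$ symbols of $y$ to obtain $z$ (i.e., the number of index sets at which $z$ occurs as a subsequence of $y$), and $\binom{y}{z}'=\binom{y[2:-2]}{z[2:-2]}$. For a string $x$ of length $k$ and $\ell\ge k$, $Y_\ell(x)$ is the set of binary strings $y$ of length $\ell$ that are supersequences of $x$ with $y[1]=x[1]$ and $y[\ell]=x[k]$. For any binary string $x$ of length $m$, $K_{s,x}[i]=\sum_{j\ge i}\binom{j-1}{i-1}(1-p)^{i-1}p^{j-i}\mathbb 1\{s[j:j+m-1]=x\}$ (terms with $j+m-1>n$ are zero), and $P_{s,x}[i]=\Pr(\tilde S[i:i+m-1]=x)$ (zero if the trace is shorter than $i+m-1$). *)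

theory Defs
  imports Complex_Main "HOL-Library.Sublist"
begin

text \<open>Binary strings are bool lists; positions are 1-based in the paper.
  substr s a m is the length-m window s[a:a+m-1] (1-based a).\<close>

definition substr :: "bool list \<Rightarrow> nat \<Rightarrow> nat \<Rightarrow> bool list" where
  "substr s a m = take m (drop (a - 1) s)"

definition occurs_at :: "bool list \<Rightarrow> bool list \<Rightarrow> nat \<Rightarrow> bool" where
  "occurs_at s x j \<longleftrightarrow> 1 \<le> j \<and> j + length x - 1 \<le> length s \<and> substr s j (length x) = x"

text \<open>K_{s,x}[i]; terms with j > n vanish, so the sum is over i..n.\<close>
definition Kvec :: "real \<Rightarrow> bool list \<Rightarrow> bool list \<Rightarrow> nat \<Rightarrow> real" where
  "Kvec p s x i = (\<Sum>j\<in>{i..length s}. real ((j - 1) choose (i - 1)) * (1 - p) ^ (i - 1) * p ^ (j - i)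
      * (if occurs_at s x j then 1 else 0))"

text \<open>Deletion channel: the set D of retained (0-based) positions of s determines the trace
  nths s D; D has probability (1-p)^|D| p^(n-|D|).\<close>
definition trace_prob :: "real \<Rightarrow> bool list \<Rightarrow> nat set \<Rightarrow> real" where
  "trace_prob p s D = (1 - p) ^ card D * p ^ (length s - card D)"

text \<open>P_{s,x}[i] = Pr(trace[i:i+m-1] = x), zero if trace too short.\<close>
definition Pvec :: "real \<Rightarrow> bool list \<Rightarrow> bool list \<Rightarrow> nat \<Rightarrow> real" where
  "Pvec p s x i = (\<Sum>D\<in>Pow {0..<length s}. trace_prob p s D * (if occurs_at (nths s D) x i then 1 else 0))"

definition str_binom :: "bool list \<Rightarrow> bool list \<Rightarrow> nat" where
  "str_binom y z = card {I. I \<subseteq> {0..<length y} \<and> card I = length z \<and> nths y I = z}"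

definition inner :: "bool list \<Rightarrow> bool list" where
  "inner z = butlast (tl z)"

definition str_binom' :: "bool list \<Rightarrow> bool list \<Rightarrow> nat" where
  "str_binom' y z = str_binom (inner y) (inner z)"

definition Yset :: "nat \<Rightarrow> bool list \<Rightarrow> bool list set" where
  "Yset l x = {y. length y = l \<and> subseq x y \<and> hd y = hd x \<and> last y = last x}"

end

theory Submission
  imports Defs
begin

text \<open>Both sides obey the same recursion in the first bit b of s = b s': that bit is deleted
  with probability p or kept with probability 1 - p, so
  K_{bs'}[i+1] = p K_{s'}[i+1] + (1-p) K_{s'}[i], and likewise for every P_{s,y}. Induction on s
  reduces everything to i = 1. There, writing x = a u c and y = a v c, the terms in which the
  first bit is kept (and equals a) combine into the sum over v of
  (-p/(1-p))^{|v|-|u|} binom(v,u) Pr(the trace of s' starts with v c). The Pascal rule for string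
  binomial coefficients gives this sum a recursion in s', and its solution
  (1-p)^{|u|+1} [s' starts with u c] is exactly the contribution of an occurrence of x at
  position 1 to (1-p)^k K.\<close>

lemma nths_Cons_Suc_image: "nths (b # t) (Suc ` D) = nths t D"
  by (simp add: nths_Cons image_iff)

lemma nths_Cons_insert_0_Suc_image: "nths (b # t) (insert 0 (Suc ` D)) = b # nths t D"
  by (simp add: nths_Cons image_iff)

lemma sum_Pow_atLeast0LessThan_Suc:
  fixes F :: "nat set \<Rightarrow> 'a::comm_monoid_add"
  shows "sum F (Pow {0..<Suc n}) =
    (\<Sum>D\<in>Pow {0..<n}. F (Suc ` D)) + (\<Sum>D\<in>Pow {0..<n}. F (insert 0 (Suc ` D)))"
proof -
  have Pow_Suc_image: "Pow (Suc ` {0..<n}) = image Suc ` Pow {0..<n}"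
    by (auto simp: subset_image_iff simp del: image_Suc_atLeastLessThan)
  have insert_0: "{0..<Suc n} = insert 0 (Suc ` {0..<n})"
    by (metis atLeast0LessThan image_Suc_lessThan lessThan_Suc_eq_insert_0)
  have Pow_split:
    "Pow {0..<Suc n} = image Suc ` Pow {0..<n} \<union> (\<lambda>D. insert 0 (Suc ` D)) ` Pow {0..<n}"
    unfolding insert_0 Pow_insert Pow_Suc_image by auto
  have inj_Suc: "inj_on (image Suc) (Pow {0..<n})"
    by (simp add: inj_on_def inj_image_eq_iff)
  have inj_insert_0: "inj_on (\<lambda>D. insert 0 (Suc ` D)) (Pow {0..<n})"
    by (rule inj_onI) (auto simp: set_eq_iff image_iff; metis nat.inject nat.distinct(1))
  show ?thesis
    unfolding Pow_split
    by (subst sum.union_disjoint) (auto simp: sum.reindex[OF inj_Suc] sum.reindex[OF inj_insert_0])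
qed

definition trace_exp :: "real \<Rightarrow> bool list \<Rightarrow> (bool list \<Rightarrow> real) \<Rightarrow> real" where
  "trace_exp p t f = (\<Sum>D\<in>Pow {0..<length t}. trace_prob p t D * f (nths t D))"

lemma Pvec_eq_trace_exp: "Pvec p s y i = trace_exp p s (\<lambda>tr. if occurs_at tr y i then 1 else 0)"
  by (simp add: Pvec_def trace_exp_def)

lemma trace_exp_Nil: "trace_exp p [] f = f []"
  by (simp add: trace_exp_def trace_prob_def)

lemma trace_exp_Cons:
  "trace_exp p (b # t) f = p * trace_exp p t f + (1 - p) * trace_exp p t (\<lambda>tr. f (b # tr))"
proof -
  have deleted: "trace_prob p (b # t) (Suc ` D) = p * trace_prob p t D"
    if "D \<in> Pow {0..<length t}" for D
  proof -
    have "card D \<le> length t"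
      using that by (metis PowD card_atLeastLessThan card_mono finite_atLeastLessThan diff_zero)
    then show ?thesis by (simp add: trace_prob_def card_image Suc_diff_le)
  qed
  have kept: "trace_prob p (b # t) (insert 0 (Suc ` D)) = (1 - p) * trace_prob p t D"
    if "D \<in> Pow {0..<length t}" for D
    using that by (simp add: trace_prob_def card_image finite_subset)
  show ?thesis
    unfolding trace_exp_def length_Cons sum_Pow_atLeast0LessThan_Suc
      nths_Cons_Suc_image nths_Cons_insert_0_Suc_image sum_distrib_left
    by (intro arg_cong2[where f="(+)"] sum.cong refl) (simp_all add: deleted kept)
qed

lemma trace_exp_const: "trace_exp p t (\<lambda>_. a) = a"
  by (induction t) (simp_all add: trace_exp_Nil trace_exp_Cons algebra_simps)

lemma str_binom_conv_sum:
  "str_binom y z = (\<Sum>I\<in>Pow {0..<length y}. if card I = length z \<and> nths y I = z then 1 else 0)"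
proof -
  have "{I. I \<subseteq> {0..<length y} \<and> card I = length z \<and> nths y I = z}
      = {I \<in> Pow {0..<length y}. card I = length z \<and> nths y I = z}"
    by auto
  then show ?thesis
    unfolding str_binom_def by (simp add: sum.inter_filter[symmetric])
qed

lemma str_binom_Nil: "str_binom [] z = (if z = [] then 1 else 0)"
  by (auto simp: str_binom_conv_sum)

lemma str_binom_Cons:
  "str_binom (a # y) z = str_binom y z
     + (case z of [] \<Rightarrow> 0 | c # z' \<Rightarrow> if a = c then str_binom y z' else 0)"
proof -
  have card_kept: "card (insert 0 (Suc ` D)) = Suc (card D)" if "D \<in> Pow {0..<length y}" for D
    using that by (simp add: card_image finite_subset)
  have "str_binom (a # y) z = str_binom y z
      + (\<Sum>D\<in>Pow {0..<length y}. if Suc (card D) = length z \<and> a # nths y D = z then 1 else 0)"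
    unfolding str_binom_conv_sum length_Cons sum_Pow_atLeast0LessThan_Suc
      nths_Cons_Suc_image nths_Cons_insert_0_Suc_image
    by (intro arg_cong2[where f="(+)"] sum.cong refl) (simp_all add: card_image card_kept)
  also have "\<dots> = str_binom y z
      + (case z of [] \<Rightarrow> 0 | c # z' \<Rightarrow> if a = c then str_binom y z' else 0)"
    by (cases z) (auto simp: str_binom_conv_sum)
  finally show ?thesis .
qed

lemma str_binom_eq_0_if_length_less: "length y < length z \<Longrightarrow> str_binom y z = 0"
proof (induction y arbitrary: z)
  case Nil
  then show ?case by (auto simp: str_binom_Nil)
next
  case (Cons a y)
  then show ?case by (cases z) (auto simp: str_binom_Cons)
qed

lemma str_binom_self: "str_binom z z = 1"
  by (induction z) (auto simp: str_binom_Nil str_binom_Cons str_binom_eq_0_if_length_less)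

lemma subseq_if_str_binom_neq_0: "str_binom y z \<noteq> 0 \<Longrightarrow> subseq z y"
proof (induction y arbitrary: z)
  case Nil
  then show ?case by (auto simp: str_binom_Nil split: if_splits)
next
  case (Cons a y)
  then show ?case
    by (cases z) (auto simp: str_binom_Cons split: if_splits intro: subseq_Cons')
qed

lemma occurs_at_Cons: "2 \<le> j \<Longrightarrow> occurs_at (b # t) x j \<longleftrightarrow> occurs_at t x (j - 1)"
  by (cases j) (auto simp: occurs_at_def substr_def drop_Cons')

lemma occurs_at_1_iff_prefix: "occurs_at t z 1 \<longleftrightarrow> prefix z t"
  by (auto simp: occurs_at_def substr_def prefix_def) (metis append_take_drop_id)

lemma Pvec_Cons_Suc:
  "1 \<le> i \<Longrightarrow> Pvec p (b # s) y (Suc i) = p * Pvec p s y (Suc i) + (1 - p) * Pvec p s y i"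
  by (simp add: Pvec_eq_trace_exp trace_exp_Cons occurs_at_Cons)

lemma Pvec_Cons_1:
  "Pvec p (b # s) y 1 = p * Pvec p s y 1
     + (1 - p) * trace_exp p s (\<lambda>tr. if prefix y (b # tr) then 1 else 0)"
  unfolding Pvec_eq_trace_exp trace_exp_Cons occurs_at_1_iff_prefix ..

lemma Pvec_eq_0_if_length_less:
  assumes "length s < i + length y - 1"
  shows "Pvec p s y i = 0"
proof -
  have length_trace: "length (nths s D) \<le> length s" for D
    using card_mono[of "{..<length s}" "{i. i < length s \<and> i \<in> D}"]
    by (auto simp: length_nths)
  show ?thesis
    unfolding Pvec_def using assms
    by (intro sum.neutral) (auto simp: occurs_at_def dest: le_trans[OF _ length_trace])
qed

lemma Kvec_Cons_1:
  "Kvec p (b # t) x 1 = (if occurs_at (b # t) x 1 then 1 else 0) + p * Kvec p t x 1"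
proof -
  have "Kvec p (b # t) x 1
      = (\<Sum>j\<in>{1..Suc (length t)}. p ^ (j - 1) * (if occurs_at (b # t) x j then 1 else 0))"
    by (simp add: Kvec_def)
  also have "\<dots> = (if occurs_at (b # t) x 1 then 1 else 0)
      + (\<Sum>j\<in>{Suc 1..Suc (length t)}. p ^ (j - 1) * (if occurs_at (b # t) x j then 1 else 0))"
    by (subst sum.atLeast_Suc_atMost) auto
  also have "(\<Sum>j\<in>{Suc 1..Suc (length t)}. p ^ (j - 1) * (if occurs_at (b # t) x j then 1 else 0))
      = p * Kvec p t x 1"
    by (subst sum.shift_bounds_cl_Suc_ivl)
      (simp add: Kvec_def occurs_at_Cons sum_distrib_left power_eq_if mult.assoc)
  finally show ?thesis .
qed

lemma Kvec_Cons_Suc: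
  assumes "1 \<le> i"
  shows "Kvec p (b # t) x (Suc i) = p * Kvec p t x (Suc i) + (1 - p) * Kvec p t x i"
proof -
  \<comment> \<open>c k j is the probability that bit j of a string becomes bit k of its trace\<close>
  define c where "c k j = real ((j - 1) choose (k - 1)) * (1 - p) ^ (k - 1) * p ^ (j - k)" for k j
  define occ where "occ j = (if occurs_at t x j then 1 else (0::real))" for j
  have Kvec_t: "Kvec p t x k = (\<Sum>j\<in>{k..length t}. c k j * occ j)" for k
    by (simp add: Kvec_def c_def occ_def)
  have pascal: "c (Suc i) (Suc j) = p * c (Suc i) j + (1 - p) * c i j" if "i \<le> j" for j
  proof (cases "j = i")
    case True
    then show ?thesis using assms by (cases i) (simp_all add: c_def)
  next
    case False
    then have "j - i = Suc (j - Suc i)" using that by auto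
    then show ?thesis using assms \<open>i \<le> j\<close>
      by (cases i; cases j) (simp_all add: c_def algebra_simps)
  qed
  have "Kvec p (b # t) x (Suc i) = (\<Sum>j\<in>{Suc i..Suc (length t)}.
      c (Suc i) j * (if occurs_at (b # t) x j then 1 else 0))"
    by (simp add: Kvec_def c_def)
  also have "\<dots> = (\<Sum>j\<in>{i..length t}. c (Suc i) (Suc j) * occ j)"
    using assms by (subst sum.shift_bounds_cl_Suc_ivl) (simp add: occ_def occurs_at_Cons)
  also have "\<dots> = (\<Sum>j\<in>{i..length t}. p * (c (Suc i) j * occ j) + (1 - p) * (c i j * occ j))"
    by (intro sum.cong refl) (simp add: pascal algebra_simps)
  also have "\<dots> = p * (\<Sum>j\<in>{i..length t}. c (Suc i) j * occ j) + (1 - p) * Kvec p t x i"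
    by (simp add: Kvec_t sum.distrib sum_distrib_left)
  also have "(\<Sum>j\<in>{i..length t}. c (Suc i) j * occ j) = Kvec p t x (Suc i)"
    using assms by (cases "i \<le> length t") (simp_all add: Kvec_t sum.atLeast_Suc_atMost c_def)
  finally show ?thesis .
qed

definition alt_weight :: "real \<Rightarrow> bool list \<Rightarrow> bool list \<Rightarrow> real" where
  "alt_weight r v u = (- r) ^ (length v - length u) * real (str_binom v u)"

lemma alt_weight_Nil: "alt_weight r [] u = (if u = [] then 1 else 0)"
  by (simp add: alt_weight_def str_binom_Nil)

lemma alt_weight_self: "alt_weight r u u = 1"
  by (simp add: alt_weight_def str_binom_self)

lemma alt_weight_Cons:
  "alt_weight r (b # v) u = - r * alt_weight r v u
     + (case u of [] \<Rightarrow> 0 | a # w \<Rightarrow> if a = b then alt_weight r v w else 0)"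
proof (cases "length u \<le> length v")
  case True
  then have "length (b # v) - length u = Suc (length v - length u)" by simp
  then show ?thesis by (cases u) (auto simp: alt_weight_def str_binom_Cons algebra_simps)
next
  case False
  then show ?thesis
    by (cases u) (auto simp: alt_weight_def str_binom_Cons str_binom_eq_0_if_length_less)
qed

lemma subseq_if_alt_weight_neq_0: "alt_weight r v u \<noteq> 0 \<Longrightarrow> subseq u v"
  by (auto simp: alt_weight_def intro: subseq_if_str_binom_neq_0)

lemma finite_bool_lists_length_le: "finite {v :: bool list. length v \<le> L}"
  using finite_lists_length_le[of "UNIV :: bool set" L] by simp

lemma sum_bool_lists_length_le_Suc:
  fixes g :: "bool list \<Rightarrow> 'a::comm_monoid_add"
  shows "sum g {v. length v \<le> Suc L} = g [] + (\<Sum>v\<in>{v. length v \<le> L}. g (True # v) + g (False # v))"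
proof -
  let ?Cons = "\<lambda>b. Cons b ` {v :: bool list. length v \<le> L}"
  have split: "{v :: bool list. length v \<le> Suc L} = insert [] (?Cons True \<union> ?Cons False)"
    by (force simp: image_iff neq_Nil_conv)
  have "[] \<notin> ?Cons True \<union> ?Cons False" and "?Cons True \<inter> ?Cons False = {}"
    by auto
  then show ?thesis
    unfolding split
    by (simp add: finite_bool_lists_length_le sum.union_disjoint sum.reindex sum.distrib)
qed

text \<open>For x = a u c and y = a v c, the part of the right-hand side at i = 1 in which the
  first bit of s is kept and equals a.\<close>

definition anchored_sum :: "real \<Rightarrow> bool \<Rightarrow> nat \<Rightarrow> bool list \<Rightarrow> bool list \<Rightarrow> real" where
  "anchored_sum p c L u t = (\<Sum>v\<in>{v. length v \<le> L}.
     alt_weight (p / (1 - p)) v u * trace_exp p t (\<lambda>tr. if prefix (v @ [c]) tr then 1 else 0))"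

lemma anchored_sum_Cons:
  "anchored_sum p c (Suc L) u (b # t) = p * anchored_sum p c (Suc L) u t
     + (1 - p) * ((if u = [] \<and> c = b then 1 else 0) - p / (1 - p) * anchored_sum p c L u t
        + (case u of [] \<Rightarrow> 0 | a # w \<Rightarrow> if a = b then anchored_sum p c L w t else 0))"
proof -
  define r where "r = p / (1 - p)"
  let ?pre = "\<lambda>v tr. if prefix (v @ [c]) tr then 1 else (0::real)"
  have anchored_sum_r: "anchored_sum p c L' u' t' =
      (\<Sum>v\<in>{v. length v \<le> L'}. alt_weight r v u' * trace_exp p t' (?pre v))" for L' u' t'
    by (simp add: anchored_sum_def r_def)
  have "anchored_sum p c (Suc L) u (b # t) = p * anchored_sum p c (Suc L) u t
      + (1 - p) * (\<Sum>v\<in>{v. length v \<le> Suc L}.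
          alt_weight r v u * trace_exp p t (\<lambda>tr. ?pre v (b # tr)))"
    unfolding anchored_sum_r trace_exp_Cons distrib_left
    by (simp add: sum.distrib mult.left_commute flip: sum_distrib_left)
  also have "(\<Sum>v\<in>{v. length v \<le> Suc L}. alt_weight r v u * trace_exp p t (\<lambda>tr. ?pre v (b # tr)))
      = (if u = [] \<and> c = b then 1 else 0)
        + (\<Sum>v\<in>{v. length v \<le> L}. alt_weight r (b # v) u * trace_exp p t (?pre v))"
    by (cases b) (simp_all add: sum_bool_lists_length_le_Suc alt_weight_Nil trace_exp_const)
  also have "(\<Sum>v\<in>{v. length v \<le> L}. alt_weight r (b # v) u * trace_exp p t (?pre v))
      = - r * anchored_sum p c L u t
        + (case u of [] \<Rightarrow> 0 | a # w \<Rightarrow> if a = b then anchored_sum p c L w t else 0)"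
    unfolding anchored_sum_r alt_weight_Cons
    by (cases u) (auto simp: algebra_simps sum.distrib sum_subtractf sum_negf sum_distrib_left)
  finally show ?thesis by (simp add: r_def)
qed

lemma anchored_sum_eq:
  assumes "p < 1" and "length t \<le> L"
  shows "anchored_sum p c L u t = (1 - p) ^ Suc (length u) * (if prefix (u @ [c]) t then 1 else 0)"
  using assms(2)
proof (induction t arbitrary: L u)
  case Nil
  then show ?case by (simp add: anchored_sum_def trace_exp_Nil)
next
  case (Cons b t)
  then obtain L' where L: "L = Suc L'" and "length t \<le> L'"
    by (cases L) auto
  then have IH: "anchored_sum p c L u' t = (1 - p) ^ Suc (length u') * (if prefix (u' @ [c]) t then 1 else 0)"
    "anchored_sum p c L' u' t = (1 - p) ^ Suc (length u') * (if prefix (u' @ [c]) t then 1 else 0)"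
    for u'
    using Cons by auto
  have "1 - p \<noteq> 0" using assms(1) by simp
  then show ?case
    unfolding L anchored_sum_Cons IH[unfolded L] by (cases u) (auto simp: field_simps)
qed

lemma inner_Cons_snoc: "inner (a # v @ [c]) = v"
  by (simp add: inner_def)

lemma Yset_self: "Yset (length x) x = {x}"
  by (auto simp: Yset_def dest: subseq_same_length)

lemma Yset_length: "y \<in> Yset l x \<Longrightarrow> length y = l"
  by (simp add: Yset_def)

lemma finite_Yset: "finite (Yset l x)"
  by (rule finite_subset[OF _ finite_list_length[of l]]) (auto simp: Yset_def)

lemma mem_Yset_iff:
  "y \<in> Yset l (a # u @ [c]) \<longleftrightarrow> (\<exists>v. y = a # v @ [c] \<and> length v + 2 = l \<and> subseq u v)"
proof
  assume y: "y \<in> Yset l (a # u @ [c])"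
  then have "length (a # u @ [c]) \<le> length y"
    by (auto simp: Yset_def dest: list_emb_length)
  then obtain a' v c' where "y = a' # v @ [c']"
    by (cases y rule: rev_cases) (auto simp: Suc_le_length_iff)
  with y show "\<exists>v. y = a # v @ [c] \<and> length v + 2 = l \<and> subseq u v"
    by (auto simp: Yset_def subseq_append)
next
  assume "\<exists>v. y = a # v @ [c] \<and> length v + 2 = l \<and> subseq u v"
  then show "y \<in> Yset l (a # u @ [c])"
    by (auto simp: Yset_def subseq_append)
qed

lemma sum_Yset_eq_sum_middles:
  assumes x: "x = a # u @ [c]" and "2 \<le> N"
  shows "(\<Sum>l\<in>{length x..N}. \<Sum>y\<in>Yset l x. f y)
    = (\<Sum>v\<in>{v. length v \<le> N - 2 \<and> subseq u v}. f (a # v @ [c]))"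
proof -
  have "(\<Sum>l\<in>{length x..N}. \<Sum>y\<in>Yset l x. f y) = sum f (\<Union>l\<in>{length x..N}. Yset l x)"
    by (rule sum.UNION_disjoint[symmetric]) (auto simp: finite_Yset dest: Yset_length)
  also have "(\<Union>l\<in>{length x..N}. Yset l x) = (\<lambda>v. a # v @ [c]) ` {v. length v \<le> N - 2 \<and> subseq u v}"
    using assms by (auto simp: mem_Yset_iff dest: list_emb_length)
  also have "sum f \<dots> = (\<Sum>v\<in>{v. length v \<le> N - 2 \<and> subseq u v}. f (a # v @ [c]))"
    by (simp add: sum.reindex inj_on_def)
  finally show ?thesis .
qed

definition signed_sum :: "real \<Rightarrow> bool list \<Rightarrow> nat \<Rightarrow> bool list \<Rightarrow> nat \<Rightarrow> real" where
  "signed_sum p x N s i = (\<Sum>l\<in>{length x..N}. \<Sum>y\<in>Yset l x.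
     alt_weight (p / (1 - p)) (inner y) (inner x) * Pvec p s y i)"

lemma signed_sum_Nil:
  assumes "2 \<le> length x" and "1 \<le> i"
  shows "signed_sum p x N [] i = 0"
proof -
  have "Pvec p [] y i = 0" if "y \<in> Yset l x" "length x \<le> l" for l y
    using that assms by (intro Pvec_eq_0_if_length_less) (auto dest: Yset_length)
  then show ?thesis
    by (simp add: signed_sum_def)
qed

lemma signed_sum_Cons_Suc:
  "1 \<le> i \<Longrightarrow> signed_sum p x N (b # s) (Suc i)
     = p * signed_sum p x N s (Suc i) + (1 - p) * signed_sum p x N s i"
  by (simp add: signed_sum_def Pvec_Cons_Suc distrib_left sum.distrib sum_distrib_left
      mult.left_commute)

lemma signed_sum_Cons_1:
  assumes x: "x = a # u @ [c]" and "2 \<le> N"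
  shows "signed_sum p x N (b # s) 1
    = p * signed_sum p x N s 1 + (1 - p) * (if a = b then anchored_sum p c (N - 2) u s else 0)"
proof -
  define r where "r = p / (1 - p)"
  let ?pre = "\<lambda>v tr. if prefix (v @ [c]) tr then 1 else (0::real)"
  have "signed_sum p x N (b # s) 1 = p * signed_sum p x N s 1
      + (1 - p) * (\<Sum>l\<in>{length x..N}. \<Sum>y\<in>Yset l x.
          alt_weight r (inner y) (inner x) * trace_exp p s (\<lambda>tr. if prefix y (b # tr) then 1 else 0))"
    unfolding signed_sum_def Pvec_Cons_1
    by (simp add: r_def distrib_left sum.distrib sum_distrib_left mult.left_commute)
  also have "(\<Sum>l\<in>{length x..N}. \<Sum>y\<in>Yset l x.
      alt_weight r (inner y) (inner x) * trace_exp p s (\<lambda>tr. if prefix y (b # tr) then 1 else 0))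
    = (\<Sum>v\<in>{v. length v \<le> N - 2 \<and> subseq u v}.
      alt_weight r v u * trace_exp p s (\<lambda>tr. if prefix (a # v @ [c]) (b # tr) then 1 else 0))"
    unfolding sum_Yset_eq_sum_middles[OF assms] by (simp add: inner_Cons_snoc x)
  also have "\<dots> = (if a = b then anchored_sum p c (N - 2) u s else 0)"
  proof (cases "a = b")
    case True
    have "(\<Sum>v\<in>{v. length v \<le> N - 2 \<and> subseq u v}. alt_weight r v u * trace_exp p s (?pre v))
        = (\<Sum>v\<in>{v. length v \<le> N - 2}. alt_weight r v u * trace_exp p s (?pre v))"
      by (rule sum.mono_neutral_left)
        (auto simp: finite_bool_lists_length_le dest: subseq_if_alt_weight_neq_0)
    with True show ?thesis
      by (simp add: anchored_sum_def r_def)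
  qed (simp add: trace_exp_const)
  finally show ?thesis .
qed

lemma Kvec_eq_signed_sum:
  assumes "p < 1" and "2 \<le> length x" and "length s < N" and "1 \<le> i"
  shows "(1 - p) ^ length x * Kvec p s x i = signed_sum p x N s i"
  using assms(3,4)
proof (induction s arbitrary: i)
  case Nil
  then show ?case
    using assms(2) by (simp add: Kvec_def signed_sum_Nil)
next
  case (Cons b s)
  show ?case
  proof (cases "i = 1")
    case True
    obtain a u c where x: "x = a # u @ [c]"
      using assms(2) by (cases x rule: rev_cases) (auto simp: Suc_le_length_iff)
    have "(1 - p) ^ length x * Kvec p (b # s) x 1
        = (1 - p) ^ length x * (if occurs_at (b # s) x 1 then 1 else 0)
          + p * ((1 - p) ^ length x * Kvec p s x 1)"
      unfolding Kvec_Cons_1 by (simp add: algebra_simps)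
    also have "\<dots> = p * signed_sum p x N s 1
          + (1 - p) * (if a = b then anchored_sum p c (N - 2) u s else 0)"
    proof -
      have "occurs_at (b # s) x 1 \<longleftrightarrow> a = b \<and> prefix (u @ [c]) s"
        unfolding occurs_at_1_iff_prefix x by auto
      moreover have "(1 - p) ^ length x * Kvec p s x 1 = signed_sum p x N s 1"
        using Cons by simp
      moreover have "anchored_sum p c (N - 2) u s
          = (1 - p) ^ Suc (length u) * (if prefix (u @ [c]) s then 1 else 0)"
        using assms(1) Cons.prems by (intro anchored_sum_eq) auto
      ultimately show ?thesis
        by (simp add: x)
    qed
    also have "\<dots> = signed_sum p x N (b # s) 1"
      using Cons.prems by (intro signed_sum_Cons_1[OF x, symmetric]) simp
    finally show ?thesis
      using True by simp
  next
    case False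
    with Cons.prems obtain i' where "i = Suc i'" and "1 \<le> i'"
      by (cases i) auto
    then show ?thesis
      using Cons by (simp add: Kvec_Cons_Suc signed_sum_Cons_Suc algebra_simps)
  qed
qed

lemma signed_sum_Suc:
  assumes "1 \<le> i" and "length s \<le> N"
  shows "signed_sum p x (Suc N) s i = signed_sum p x N s i"
proof -
  have "Pvec p s y i = 0" if "y \<in> Yset (Suc N) x" for y
    using that assms by (intro Pvec_eq_0_if_length_less) (auto dest: Yset_length)
  then show ?thesis
    by (simp add: signed_sum_def atLeastAtMostSuc_conv)
qed

lemma signed_sum_eq_Pvec_minus:
  assumes "2 \<le> length x" and "length x \<le> N"
  shows "signed_sum p x N s i = Pvec p s x i - (\<Sum>l\<in>{length x + 1..N}. \<Sum>y\<in>Yset l x.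
    (-1) ^ (length y - length x + 1) * Pvec p s y i * real (str_binom' y x)
      * (p / (1 - p)) ^ (l - length x))"
proof -
  have summand: "alt_weight (p / (1 - p)) (inner y) (inner x) * Pvec p s y i
      = - ((-1) ^ (length y - length x + 1) * Pvec p s y i * real (str_binom' y x)
        * (p / (1 - p)) ^ (l - length x))"
    if "y \<in> Yset l x" for l y
  proof -
    have "length y = l" and "length (inner y) - length (inner x) = l - length x"
      using Yset_length[OF that] assms(1) by (auto simp: inner_def)
    then show ?thesis
      by (simp add: alt_weight_def str_binom'_def power_minus[of "p / (1 - p)"])
  qed
  have "signed_sum p x N s i = Pvec p s x i + (\<Sum>l\<in>{length x + 1..N}. \<Sum>y\<in>Yset l x.
      alt_weight (p / (1 - p)) (inner y) (inner x) * Pvec p s y i)"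
    using assms(2) by (simp add: signed_sum_def sum.atLeast_Suc_atMost Yset_self alt_weight_self)
  also have "(\<Sum>l\<in>{length x + 1..N}. \<Sum>y\<in>Yset l x.
      alt_weight (p / (1 - p)) (inner y) (inner x) * Pvec p s y i)
    = - (\<Sum>l\<in>{length x + 1..N}. \<Sum>y\<in>Yset l x.
      (-1) ^ (length y - length x + 1) * Pvec p s y i * real (str_binom' y x)
        * (p / (1 - p)) ^ (l - length x))"
    unfolding sum_negf[symmetric] by (intro sum.cong refl) (rule summand)
  finally show ?thesis
    by simp
qed

theorem lemma1:
  fixes s x :: "bool list" and p :: real and i :: nat
  assumes "0 \<le> p" and "p < 1"
    and "length x \<ge> 2"
    and "1 \<le> i" and "i + length x \<le> length s + 1"
  shows "Kvec p s x i = 1 / (1 - p) ^ length x *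
    (Pvec p s x i - (\<Sum>l\<in>{length x + 1..length s}. \<Sum>y\<in>Yset l x.
        (-1) ^ (length y - length x + 1) * Pvec p s y i * real (str_binom' y x)
          * (p / (1 - p)) ^ (l - length x)))"
proof -
  have "(1 - p) ^ length x * Kvec p s x i = signed_sum p x (Suc (length s)) s i"
    using assms by (intro Kvec_eq_signed_sum) auto
  also have "\<dots> = signed_sum p x (length s) s i"
    using assms(4) by (rule signed_sum_Suc) simp
  finally show ?thesis
    using assms by (simp add: signed_sum_eq_Pvec_minus field_simps)
qed

end
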